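(* Let $0<q<1$ and let ${\cal H}_n(z|q)=\sum_{k=0}^n\frac{(q;q)_n\,q^{-k/2}z^k}{(q;q)_k(q;q)_{n-k}}$ be the Rogers–Szegő polynomials, with orthonormal versions $\phi_n(z)=\frac{q^{n/2}}{\sqrt{(q;q)_n}}{\cal H}_n(z|q)$ (orthonormal on the unit circle with respect to $w(z)=\frac{(q^{1/2}z,q^{1/2}/z;q)_\infty}{2\pi(q;q)_\infty}$). Then $(D_q\phi_n)(z)=\frac{\sqrt{1-q^n}}{1-q}\phi_{n-1}(z)$ for $n\ge1$, and the $q$-discriminants are $$D(\phi_n,q)=\frac{(-q)^{n(n-1)/2}}{(1-q)^n}(q;q)_n\prod_{j=1}^{n-1}\frac{1}{(q;q)_j},\qquad D({\cal H}_n,q)=(-q)^{-n(n-1)/2}\Big[\frac{(q;q)_n}{1-q}\Big]^n\prod_{j=1}^{n-1}\frac{1}{(q;q)_j}.$$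
   Context: $(a;q)_0=1$, $(a;q)_n=\prod_{k=1}^n(1-aq^{k-1})$ for $n\ge1$ or $n=\infty$, and $(a,b;q)_n=(a;q)_n(b;q)_n$. $(D_qf)(z)=\frac{f(z)-f(qz)}{z-qz}$. For $f(z)=\gamma\prod_{j=1}^n(z-z_j)$, the $q$-discriminant is $D(f,q)=\gamma^{2n-2}q^{n(n-1)/2}\prod_{1\le j<k\le n}(q^{1/2}z_j-q^{-1/2}z_k)(q^{-1/2}z_j-q^{1/2}z_k)$. *)

theory Defs
  imports Complex_Main "HOL-Computational_Algebra.Polynomial"
begin

definition qpoch :: "real \<Rightarrow> real \<Rightarrow> nat \<Rightarrow> real" where
  "qpoch a q n = (\<Prod>k<n. (1 - a * q ^ k))"

definition rogers_szego :: "real \<Rightarrow> nat \<Rightarrow> complex poly" where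
  "rogers_szego q n = (\<Sum>k\<le>n. monom (complex_of_real
      (qpoch q q n * (1 / sqrt q) ^ k / (qpoch q q k * qpoch q q (n - k)))) k)"

definition rs_phi :: "real \<Rightarrow> nat \<Rightarrow> complex poly" where
  "rs_phi q n = smult (complex_of_real (sqrt q ^ n / sqrt (qpoch q q n))) (rogers_szego q n)"

definition qder :: "complex \<Rightarrow> (complex \<Rightarrow> complex) \<Rightarrow> complex \<Rightarrow> complex" where
  "qder q f z = (f z - f (q * z)) / (z - q * z)"

text \<open>The root list (with multiplicity) is chosen by SOME; the expression is symmetric in the roots.\<close>
definition qdisc :: "real \<Rightarrow> complex poly \<Rightarrow> complex" where
  "qdisc q f = (let n = degree f; g = lead_coeff f;
       zs = (SOME zs. length zs = n \<and> f = smult g (\<Prod>z\<leftarrow>zs. [:- z, 1:]));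
       s = complex_of_real (sqrt q)
     in g powi (2 * int n - 2) * complex_of_real (q ^ (n * (n - 1) div 2)) *
        (\<Prod>j<n. \<Prod>k\<in>{j<..<n}. (s * zs ! j - zs ! k / s) * (zs ! j / s - s * zs ! k)))"

end

theory Submission
  imports Defs "HOL-Computational_Algebra.Fundamental_Theorem_Algebra"
begin

(* Let z_1, ..., z_n be the roots of f and gamma its leading coefficient. Each factor of the
   q-discriminant satisfies
     (q^(1/2) z_j - q^(-1/2) z_k) (q^(-1/2) z_j - q^(1/2) z_k) = -q^(-1) (q z_j - z_k) (q z_k - z_j),
   so D(f,q) = (-1)^(n(n-1)/2) gamma^(n-1) prod_j f(q z_j) / ((1-q)^n f(0)).
   For the Rogers-Szego polynomials the q-difference relation
   H_(n+1)(z) - H_(n+1)(q z) = (1 - q^(n+1)) q^(-1/2) z H_n(z), evaluated at the roots w of H_(n+1),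
   gives prod_w H_(n+1)(q w) = (1 - q^(n+1))^(n+1) prod_w H_n(w). By the symmetry of the resultant,
   prod_w H_n(w) is prod_v H_(n+1)(v) over the roots v of H_n, and the recurrence
   H_(n+1)(z) = H_n(q z) + q^(-1/2) z H_n(z) turns this into prod_v H_n(q v). Induction yields
   prod_w H_n(q w) = prod_(i=1..n) (1 - q^i)^i, which is (q;q)_n^n / prod_(j<n) (q;q)_j.
   Finally phi_n is a constant multiple of H_n, and the q-derivative of phi_n is the
   q-difference relation again. *)

section \<open>Root lists and the q-discriminant\<close>

(* Literally the list chosen by SOME in qdisc_def. *)
definition root_list :: "complex poly \<Rightarrow> complex list" where
  "root_list f = (SOME zs. length zs = degree f \<and> f = smult (lead_coeff f) (\<Prod>z\<leftarrow>zs. [:- z, 1:]))"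

lemma root_list:
  fixes f :: "complex poly"
  assumes "f \<noteq> 0"
  shows "length (root_list f) = degree f"
    and "f = smult (lead_coeff f) (\<Prod>z\<leftarrow>root_list f. [:- z, 1:])"
proof -
  obtain zs where zs: "mset zs = proots f"
    using ex_mset by blast
  have "f = smult (lead_coeff f) (\<Prod>z\<leftarrow>zs. [:- z, 1:])"
    by (metis complex_poly_decompose_multiset prod_mset_prod_list mset_map zs)
  moreover have "length zs = degree f"
    using zs assms by (metis size_mset size_proots_complex)
  ultimately have "\<exists>zs. length zs = degree f \<and> f = smult (lead_coeff f) (\<Prod>z\<leftarrow>zs. [:- z, 1:])"
    by blast
  then have "length (root_list f) = degree f \<and> f = smult (lead_coeff f) (\<Prod>z\<leftarrow>root_list f. [:- z, 1:])"
    unfolding root_list_def by (rule someI_ex)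
  then show "length (root_list f) = degree f" "f = smult (lead_coeff f) (\<Prod>z\<leftarrow>root_list f. [:- z, 1:])"
    by auto
qed

lemma poly_eq_prod_root_list:
  fixes f :: "complex poly"
  assumes "f \<noteq> 0"
  shows "poly f x = lead_coeff f * (\<Prod>j<degree f. x - root_list f ! j)"
proof -
  have "poly f x = poly (smult (lead_coeff f) (\<Prod>z\<leftarrow>root_list f. [:- z, 1:])) x"
    using root_list(2)[OF assms] by (rule arg_cong)
  then show ?thesis
    by (simp add: poly_prod prod.list_conv_set_nth atLeast0LessThan root_list(1)[OF assms])
qed

lemma poly_root_list_nth:
  fixes f :: "complex poly"
  assumes "f \<noteq> 0" "j < degree f"
  shows "poly f (root_list f ! j) = 0"
  using assms by (force simp: poly_eq_prod_root_list)

lemma prod_root_list: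
  fixes f :: "complex poly"
  assumes "f \<noteq> 0"
  shows "(\<Prod>j<degree f. root_list f ! j) = (-1) ^ degree f * poly f 0 / lead_coeff f"
proof -
  have "poly f 0 = lead_coeff f * (-1) ^ degree f * (\<Prod>j<degree f. root_list f ! j)"
    by (simp add: poly_eq_prod_root_list[OF assms] prod_uminus)
  with assms show ?thesis
    by (simp add: field_simps flip: power_add mult_2)
qed

lemma root_list_smult:
  fixes f :: "complex poly"
  assumes "c \<noteq> 0"
  shows "root_list (smult c f) = root_list f"
proof -
  have "smult c f = smult (lead_coeff (smult c f)) p \<longleftrightarrow> f = smult (lead_coeff f) p" for p
    using assms by (metis lead_coeff_smult smult_eq_iff smult_smult)
  then show ?thesis
    using assms by (simp add: root_list_def)
qed

lemma qdisc_root_list: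
  "qdisc q f = lead_coeff f powi (2 * int (degree f) - 2) * of_real (q ^ (degree f * (degree f - 1) div 2))
    * (\<Prod>j<degree f. \<Prod>k\<in>{j<..<degree f}.
        (of_real (sqrt q) * root_list f ! j - root_list f ! k / of_real (sqrt q))
        * (root_list f ! j / of_real (sqrt q) - of_real (sqrt q) * root_list f ! k))"
  unfolding qdisc_def Let_def root_list_def ..

lemma qdisc_smult:
  assumes "c \<noteq> 0"
  shows "qdisc q (smult c f) = c powi (2 * int (degree f) - 2) * qdisc q f"
  using assms by (simp add: qdisc_root_list root_list_smult power_int_mult_distrib)

lemma prod_offdiag_pairs:
  fixes F :: "nat \<Rightarrow> nat \<Rightarrow> 'a::comm_monoid_mult"
  shows "(\<Prod>j<n. \<Prod>k\<in>{j<..<n}. c * F j k * F k j)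
    = c ^ (n * (n - 1) div 2) * (\<Prod>j<n. \<Prod>k\<in>{..<n} - {j}. F j k)"
proof (induction n)
  case (Suc n)
  have upper: "(\<Prod>j<Suc n. \<Prod>k\<in>{j<..<Suc n}. G j k) = (\<Prod>j<n. G j n) * (\<Prod>j<n. \<Prod>k\<in>{j<..<n}. G j k)"
    for G :: "nat \<Rightarrow> nat \<Rightarrow> 'a"
  proof -
    have "{j<..<Suc n} = insert n {j<..<n}" if "j < n" for j
      using that by auto
    moreover have "{n<..<Suc n} = {}"
      by auto
    ultimately show ?thesis
      by (simp add: prod.distrib)
  qed
  have offdiag: "(\<Prod>j<Suc n. \<Prod>k\<in>{..<Suc n} - {j}. F j k)
      = (\<Prod>k<n. F n k) * (\<Prod>j<n. F j n) * (\<Prod>j<n. \<Prod>k\<in>{..<n} - {j}. F j k)"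
  proof -
    have "{..<Suc n} - {j} = insert n ({..<n} - {j})" if "j < n" for j
      using that by auto
    moreover have "{..<Suc n} - {n} = {..<n}"
      by auto
    ultimately show ?thesis
      by (simp add: prod.distrib mult_ac)
  qed
  have "Suc n * (Suc n - 1) div 2 = n + n * (n - 1) div 2"
    by (induction n) auto
  then show ?case
    unfolding upper[of "\<lambda>j k. c * F j k * F k j"] offdiag Suc.IH
    by (simp add: prod.distrib power_add mult_ac)
qed simp

lemma prod_poly_at_root_list_swap:
  fixes f p :: "complex poly"
  assumes f: "f \<noteq> 0" and p: "p \<noteq> 0"
  shows "(\<Prod>j<degree f. poly p (root_list f ! j)) * lead_coeff f ^ degree p
    = (-1) ^ (degree f * degree p) * (\<Prod>i<degree p. poly f (root_list p ! i)) * lead_coeff p ^ degree f"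
proof -
  define X where "X = (\<Prod>j<degree f. \<Prod>i<degree p. root_list f ! j - root_list p ! i)"
  have "(\<Prod>j<degree f. poly p (root_list f ! j)) = lead_coeff p ^ degree f * X"
    by (simp add: X_def poly_eq_prod_root_list[OF p] prod.distrib)
  moreover have "(\<Prod>i<degree p. poly f (root_list p ! i)) = lead_coeff f ^ degree p * (-1) ^ (degree f * degree p) * X"
  proof -
    have "(\<Prod>i<degree p. \<Prod>j<degree f. root_list p ! i - root_list f ! j)
        = (\<Prod>i<degree p. (-1) ^ degree f * (\<Prod>j<degree f. root_list f ! j - root_list p ! i))"
      using prod_uminus[of "\<lambda>j. root_list f ! j - _" "{..<degree f}"] by simp
    also have "\<dots> = (-1) ^ (degree f * degree p) * X"
      by (simp add: X_def prod.distrib power_mult prod.swap[of _ "{..<degree p}"])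
    finally show ?thesis
      by (simp add: poly_eq_prod_root_list[OF f] prod.distrib)
  qed
  moreover have "((-1) ^ (degree f * degree p) * (-1) ^ (degree f * degree p) :: complex) = 1"
    by (simp flip: power_add mult_2)
  ultimately show ?thesis
    by (simp add: mult_ac)
qed

lemma prod_offdiag_q_root_list:
  fixes f :: "complex poly"
  assumes deg: "degree f = Suc m" and f0: "poly f 0 \<noteq> 0" and Q: "Q \<noteq> 1"
  shows "(\<Prod>j<Suc m. \<Prod>k\<in>{..<Suc m} - {j}. Q * root_list f ! j - root_list f ! k)
    = (\<Prod>j<Suc m. poly f (Q * root_list f ! j)) / (lead_coeff f ^ m * ((1 - Q) ^ Suc m * poly f 0))"
proof -
  define a where "a j = root_list f ! j" for j
  define g where "g = lead_coeff f"
  have "f \<noteq> 0"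
    using deg by auto
  then have g: "g \<noteq> 0"
    by (simp add: g_def)
  have prod_a: "(\<Prod>j<Suc m. a j) = (-1) ^ Suc m * poly f 0 / g"
    using prod_root_list[OF \<open>f \<noteq> 0\<close>] by (simp add: a_def g_def deg)
  have a0: "a j \<noteq> 0" if "j < Suc m" for j
  proof
    assume "a j = 0"
    then have "(\<Prod>j<Suc m. a j) = 0"
      using that by (intro prod_zero) auto
    with prod_a f0 g show False
      by simp
  qed
  have offdiag: "(\<Prod>k\<in>{..<Suc m} - {j}. Q * a j - a k) = poly f (Q * a j) / (g * (Q - 1) * a j)"
    if "j < Suc m" for j
  proof -
    have "poly f (Q * a j) = g * (\<Prod>k<Suc m. Q * a j - a k)"
      by (simp add: poly_eq_prod_root_list[OF \<open>f \<noteq> 0\<close>] a_def g_def deg)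
    also have "\<dots> = g * ((Q * a j - a j) * (\<Prod>k\<in>{..<Suc m} - {j}. Q * a j - a k))"
      using that by (subst prod.remove[of _ j]) auto
    finally show ?thesis
      using g Q a0[OF that] by (simp add: field_simps)
  qed
  have sign: "(g * (Q - 1)) ^ Suc m * (-1) ^ Suc m = g * (g ^ m * (1 - Q) ^ Suc m)"
  proof -
    have "(g * (Q - 1)) ^ Suc m * (-1) ^ Suc m = (g * (1 - Q)) ^ Suc m"
      unfolding power_mult_distrib[symmetric]
      by (rule arg_cong[where f = "\<lambda>x. x ^ Suc m"]) (simp add: algebra_simps)
    then show ?thesis
      by (simp add: power_mult_distrib)
  qed
  have "(\<Prod>j<Suc m. \<Prod>k\<in>{..<Suc m} - {j}. Q * a j - a k)
      = (\<Prod>j<Suc m. poly f (Q * a j)) / ((g * (Q - 1)) ^ Suc m * (\<Prod>j<Suc m. a j))"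
    by (simp add: offdiag prod_dividef prod.distrib power_mult_distrib)
  also have "(g * (Q - 1)) ^ Suc m * (\<Prod>j<Suc m. a j) = g ^ m * ((1 - Q) ^ Suc m * poly f 0)"
    unfolding prod_a by (simp only: times_divide_eq_right mult.assoc[symmetric] sign) (use g in simp)
  finally show ?thesis
    by (simp add: a_def g_def)
qed

lemma qdisc_eq_prod_poly_at_q_roots:
  fixes f :: "complex poly" and q :: real
  assumes q: "0 < q" "q \<noteq> 1" and deg: "degree f = Suc m" and f0: "poly f 0 \<noteq> 0"
  shows "qdisc q f = (-1) ^ (Suc m * m div 2) * lead_coeff f ^ m
      * (\<Prod>j<Suc m. poly f (of_real q * root_list f ! j)) / ((1 - of_real q) ^ Suc m * poly f 0)"
proof -
  define a where "a j = root_list f ! j" for j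
  define g where "g = lead_coeff f"
  define N where "N = Suc m * m div 2"
  define s where "s = complex_of_real (sqrt q)"
  define Q where "Q = complex_of_real q"
  have "g \<noteq> 0"
    using deg by (metis degree_0 g_def leading_coeff_0_iff nat.distinct(1))
  have Q: "Q \<noteq> 0" "Q \<noteq> 1" "s * s = Q"
    using q by (auto simp: Q_def s_def simp flip: of_real_mult)
  then have pair: "(s * x - y / s) * (x / s - s * y) = (-1 / Q) * (Q * x - y) * (Q * y - x)" for x y
    by (auto simp: field_simps)
  have powi: "lead_coeff f powi (2 * int (degree f) - 2) = g ^ (2 * m)"
  proof -
    have "2 * int (degree f) - 2 = int (2 * m)"
      using deg by simp
    then show ?thesis
      by (simp only: g_def power_int_of_nat)
  qed
  have "qdisc q f = g ^ (2 * m) * Q ^ N * (\<Prod>j<Suc m. \<Prod>k\<in>{j<..<Suc m}. (s * a j - a k / s) * (a j / s - s * a k))"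
    unfolding qdisc_root_list powi by (simp add: deg a_def N_def s_def Q_def)
  also have "\<dots> = g ^ (2 * m) * (Q ^ N * (-1 / Q) ^ N) * (\<Prod>j<Suc m. \<Prod>k\<in>{..<Suc m} - {j}. Q * a j - a k)"
    unfolding pair prod_offdiag_pairs N_def by (simp only: mult.assoc diff_Suc_1)
  also have "Q ^ N * (-1 / Q) ^ N = (-1) ^ N"
    using Q by (simp flip: power_mult_distrib)
  also have "(\<Prod>j<Suc m. \<Prod>k\<in>{..<Suc m} - {j}. Q * a j - a k)
      = (\<Prod>j<Suc m. poly f (Q * a j)) / (g ^ m * ((1 - Q) ^ Suc m * poly f 0))"
    unfolding a_def g_def by (rule prod_offdiag_q_root_list[OF deg f0 \<open>Q \<noteq> 1\<close>])
  also have "g ^ (2 * m) * (-1) ^ N * ((\<Prod>j<Suc m. poly f (Q * a j)) / (g ^ m * ((1 - Q) ^ Suc m * poly f 0)))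
      = (-1) ^ N * g ^ m * (\<Prod>j<Suc m. poly f (Q * a j)) / ((1 - Q) ^ Suc m * poly f 0)"
  proof -
    have "g ^ (2 * m) * x * (y / (g ^ m * z)) = x * g ^ m * y / z" if "z \<noteq> 0" for x y z
      unfolding mult_2 power_add using \<open>g \<noteq> 0\<close> that by (simp add: field_simps)
    then show ?thesis
      using Q f0 by simp
  qed
  finally show ?thesis
    by (simp add: a_def g_def N_def Q_def)
qed

section \<open>q-binomial coefficients and Rogers-Szego polynomials\<close>

lemma qpoch_0 [simp]: "qpoch a q 0 = 1"
  by (simp add: qpoch_def)

lemma qpoch_Suc: "qpoch a q (Suc n) = qpoch a q n * (1 - a * q ^ n)"
  by (simp add: qpoch_def)

lemma qpoch_pos:
  assumes "a < 1" "0 \<le> q" "q \<le> 1"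
  shows "0 < qpoch a q n"
proof -
  have "a * q ^ k < 1" for k
  proof (cases "a \<le> 0")
    case True
    then have "a * q ^ k \<le> 0"
      using assms by (simp add: mult_nonpos_nonneg)
    then show ?thesis
      by linarith
  next
    case False
    then have "a * q ^ k \<le> a"
      using assms by (simp add: mult_left_le power_le_one)
    then show ?thesis
      using assms by linarith
  qed
  then show ?thesis
    by (simp add: qpoch_def prod_pos)
qed

definition qbinom :: "real \<Rightarrow> nat \<Rightarrow> nat \<Rightarrow> real" where
  "qbinom q n k = (if k \<le> n then qpoch q q n / (qpoch q q k * qpoch q q (n - k)) else 0)"

lemma prod_qpoch_triangle:
  "(\<Prod>i=1..n. (1 - q ^ i) ^ i) * (\<Prod>j=1..n-1. qpoch q q j) = qpoch q q n ^ n"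
proof (induction n)
  case (Suc n)
  have "(\<Prod>j=1..n. qpoch q q j) = (\<Prod>j=1..n-1. qpoch q q j) * qpoch q q n"
    by (cases n) (simp_all add: prod.cl_ivl_Suc)
  then have "(\<Prod>i=1..Suc n. (1 - q ^ i) ^ i) * (\<Prod>j=1..Suc n-1. qpoch q q j)
      = ((\<Prod>i=1..n. (1 - q ^ i) ^ i) * (\<Prod>j=1..n-1. qpoch q q j)) * qpoch q q n * (1 - q ^ Suc n) ^ Suc n"
    by (simp add: prod.cl_ivl_Suc mult_ac)
  also have "\<dots> = qpoch q q n ^ n * qpoch q q n * (1 - q ^ Suc n) ^ Suc n"
    by (simp only: Suc.IH)
  also have "\<dots> = qpoch q q (Suc n) ^ Suc n"
    by (simp add: qpoch_Suc power_mult_distrib)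
  finally show ?case .
qed simp

lemma rogers_szego_0 [simp]: "rogers_szego q 0 = 1"
  by (simp add: rogers_szego_def monom_0 one_pCons)

(* The classical Rogers-Szego polynomial h_n(x) = sum_k [n over k]_q x^k; the paper's
   H_n(z|q) is h_n(q^(-1/2) z). *)
definition rogers_szego_h :: "real \<Rightarrow> nat \<Rightarrow> complex \<Rightarrow> complex" where
  "rogers_szego_h q n x = (\<Sum>k\<le>n. of_real (qbinom q n k) * x ^ k)"

context
  fixes q :: real
  assumes q: "0 < q" "q < 1"
begin

lemma qpoch_qq_pos: "0 < qpoch q q n"
  using q by (simp add: qpoch_pos)

lemma one_minus_q_power_pos: "0 < 1 - q ^ Suc n"
  using power_Suc_less_one[OF q, of n] by linarith

lemma qbinom_0_right [simp]: "qbinom q n 0 = 1"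
  using qpoch_qq_pos[of n] by (simp add: qbinom_def)

lemma qbinom_same [simp]: "qbinom q n n = 1"
  using qpoch_qq_pos[of n] by (simp add: qbinom_def)

lemma qbinom_Suc_Suc_mult:
  "qbinom q (Suc n) (Suc k) * (1 - q ^ Suc k) = (1 - q ^ Suc n) * qbinom q n k"
  using qpoch_qq_pos[of k] qpoch_qq_pos[of "n - k"] one_minus_q_power_pos[of k]
  by (auto simp: qbinom_def qpoch_Suc Suc_diff_le field_simps)

lemma qbinom_Suc_right_mult:
  "qbinom q n (Suc k) * (1 - q ^ Suc k) = (1 - q ^ (n - k)) * qbinom q n k"
proof (cases "k < n")
  case True
  then obtain d where d: "n - k = Suc d" "n - Suc k = d"
    by (metis Suc_diff_Suc diff_Suc_1)
  then show ?thesis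
    using True qpoch_qq_pos[of k] qpoch_qq_pos[of d] one_minus_q_power_pos[of k] one_minus_q_power_pos[of d]
    by (simp add: qbinom_def qpoch_Suc field_simps)
qed (auto simp: qbinom_def)

lemma qbinom_Suc_Suc:
  "qbinom q (Suc n) (Suc k) = q ^ Suc k * qbinom q n (Suc k) + qbinom q n k"
proof -
  have "qbinom q (Suc n) (Suc k) * (1 - q ^ Suc k) = (q ^ Suc k * qbinom q n (Suc k) + qbinom q n k) * (1 - q ^ Suc k)"
  proof (cases "k \<le> n")
    case True
    then have "q ^ Suc k * q ^ (n - k) = q ^ Suc n"
      by (simp flip: power_add)
    then have "(q ^ Suc k * qbinom q n (Suc k) + qbinom q n k) * (1 - q ^ Suc k)
        = q ^ Suc k * ((1 - q ^ (n - k)) * qbinom q n k) + qbinom q n k * (1 - q ^ Suc k)"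
      by (simp only: distrib_right mult.assoc qbinom_Suc_right_mult)
    also have "\<dots> = (1 - q ^ Suc k * q ^ (n - k)) * qbinom q n k"
      by (simp add: algebra_simps)
    also have "\<dots> = (1 - q ^ Suc n) * qbinom q n k"
      by (simp only: \<open>q ^ Suc k * q ^ (n - k) = q ^ Suc n\<close>)
    finally show ?thesis
      using qbinom_Suc_Suc_mult[of n k] by simp
  qed (simp add: qbinom_def)
  then show ?thesis
    using one_minus_q_power_pos[of k] by simp
qed

lemma rogers_szego_h_q_diff:
  "rogers_szego_h q (Suc n) x - rogers_szego_h q (Suc n) (of_real q * x)
    = of_real (1 - q ^ Suc n) * x * rogers_szego_h q n x"
proof -
  have "rogers_szego_h q (Suc n) x - rogers_szego_h q (Suc n) (of_real q * x)
      = (\<Sum>k\<le>Suc n. of_real (qbinom q (Suc n) k * (1 - q ^ k)) * x ^ k)"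
    by (simp add: rogers_szego_h_def power_mult_distrib algebra_simps flip: sum_subtractf)
  also have "\<dots> = (\<Sum>k\<le>n. of_real (qbinom q (Suc n) (Suc k) * (1 - q ^ Suc k)) * x ^ Suc k)"
    by (subst sum.atMost_Suc_shift) simp
  also have "\<dots> = of_real (1 - q ^ Suc n) * x * rogers_szego_h q n x"
    by (simp only: qbinom_Suc_Suc_mult) (simp add: rogers_szego_h_def sum_distrib_left algebra_simps)
  finally show ?thesis .
qed

lemma rogers_szego_h_Suc:
  "rogers_szego_h q (Suc n) x = rogers_szego_h q n (of_real q * x) + x * rogers_szego_h q n x"
proof -
  have shifted: "rogers_szego_h q m y = 1 + (\<Sum>k\<le>m. of_real (qbinom q m (Suc k)) * y ^ Suc k)" for m y
  proof -
    have "rogers_szego_h q m y = (\<Sum>k\<le>Suc m. of_real (qbinom q m k) * y ^ k)"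
      by (simp add: rogers_szego_h_def qbinom_def)
    also have "\<dots> = 1 + (\<Sum>k\<le>m. of_real (qbinom q m (Suc k)) * y ^ Suc k)"
      by (simp only: sum.atMost_Suc_shift) simp
    finally show ?thesis .
  qed
  have "rogers_szego_h q (Suc n) x = 1 + (\<Sum>k\<le>n. of_real (qbinom q (Suc n) (Suc k)) * x ^ Suc k)"
    unfolding rogers_szego_h_def by (simp only: sum.atMost_Suc_shift) simp
  also have "\<dots> = 1 + (\<Sum>k\<le>n. of_real (qbinom q n (Suc k)) * (of_real q * x) ^ Suc k) + x * rogers_szego_h q n x"
    by (simp add: qbinom_Suc_Suc rogers_szego_h_def power_mult_distrib sum.distrib sum_distrib_left algebra_simps)
  also have "1 + (\<Sum>k\<le>n. of_real (qbinom q n (Suc k)) * (of_real q * x) ^ Suc k) = rogers_szego_h q n (of_real q * x)"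
    by (rule shifted[symmetric])
  finally show ?thesis .
qed

lemma poly_rogers_szego: "poly (rogers_szego q n) z = rogers_szego_h q n (z / of_real (sqrt q))"
  by (simp add: rogers_szego_def rogers_szego_h_def poly_sum poly_monom qbinom_def power_divide field_simps)

lemma coeff_rogers_szego:
  "coeff (rogers_szego q n) k = (if k \<le> n then of_real (qbinom q n k * (1 / sqrt q) ^ k) else 0)"
  by (simp add: rogers_szego_def coeff_sum coeff_monom qbinom_def)

lemma degree_rogers_szego [simp]: "degree (rogers_szego q n) = n"
proof (rule antisym)
  show "degree (rogers_szego q n) \<le> n"
    by (rule degree_le) (simp add: coeff_rogers_szego)
  show "n \<le> degree (rogers_szego q n)"
    by (rule le_degree) (use q in \<open>simp add: coeff_rogers_szego\<close>)
qed

lemma coeff_rogers_szego_degree [simp]: "coeff (rogers_szego q n) n = (1 / of_real (sqrt q)) ^ n"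
  by (simp add: coeff_rogers_szego power_divide)

lemma rogers_szego_nonzero [simp]: "rogers_szego q n \<noteq> 0"
proof -
  have "coeff (rogers_szego q n) n \<noteq> 0"
    using q by simp
  then show ?thesis
    by (metis coeff_0)
qed

lemma poly_rogers_szego_at_0 [simp]: "poly (rogers_szego q n) 0 = 1"
  by (simp add: poly_rogers_szego rogers_szego_h_def sum.atMost_shift)

lemma poly_rogers_szego_q_diff:
  "poly (rogers_szego q (Suc n)) (of_real q * z)
    = poly (rogers_szego q (Suc n)) z - of_real (1 - q ^ Suc n) * (z / of_real (sqrt q)) * poly (rogers_szego q n) z"
  using rogers_szego_h_q_diff[of n "z / of_real (sqrt q)"] by (simp add: poly_rogers_szego algebra_simps)

lemma poly_rogers_szego_Suc:
  "poly (rogers_szego q (Suc n)) z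
    = poly (rogers_szego q n) (of_real q * z) + z / of_real (sqrt q) * poly (rogers_szego q n) z"
  using rogers_szego_h_Suc[of n "z / of_real (sqrt q)"] by (simp add: poly_rogers_szego algebra_simps)

lemma prod_rogers_szego_at_q_roots_Suc:
  "(\<Prod>j<Suc n. poly (rogers_szego q (Suc n)) (of_real q * root_list (rogers_szego q (Suc n)) ! j))
    = of_real ((1 - q ^ Suc n) ^ Suc n) * (\<Prod>j<Suc n. poly (rogers_szego q n) (root_list (rogers_szego q (Suc n)) ! j))"
proof -
  define w where "w j = root_list (rogers_szego q (Suc n)) ! j" for j
  define s where "s = complex_of_real (sqrt q)"
  define c where "c = - of_real (1 - q ^ Suc n) / s"
  have "s \<noteq> 0"
    using q by (simp add: s_def)
  have at_root: "poly (rogers_szego q (Suc n)) (of_real q * w j) = c * w j * poly (rogers_szego q n) (w j)"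
    if "j < Suc n" for j
    using poly_root_list_nth[of "rogers_szego q (Suc n)" j] that \<open>s \<noteq> 0\<close> by (simp add: poly_rogers_szego_q_diff[folded s_def] w_def c_def field_simps)
  have prod_w: "(\<Prod>j<Suc n. w j) = (-1) ^ Suc n * s ^ Suc n"
    using prod_root_list[of "rogers_szego q (Suc n)"]
    by (simp add: w_def s_def power_divide)
  have "(\<Prod>j<Suc n. poly (rogers_szego q (Suc n)) (of_real q * w j))
      = (\<Prod>j<Suc n. c * w j * poly (rogers_szego q n) (w j))"
    by (rule prod.cong) (simp_all add: at_root)
  also have "\<dots> = c ^ Suc n * (\<Prod>j<Suc n. w j) * (\<Prod>j<Suc n. poly (rogers_szego q n) (w j))"
    by (simp only: prod.distrib prod_constant card_lessThan)
  also have "\<dots> = (c * (-1) * s) ^ Suc n * (\<Prod>j<Suc n. poly (rogers_szego q n) (w j))"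
    by (simp only: prod_w power_mult_distrib mult.assoc)
  also have "c * (-1) * s = of_real (1 - q ^ Suc n)"
    using \<open>s \<noteq> 0\<close> by (simp add: c_def)
  finally show ?thesis
    by (simp add: w_def)
qed

lemma prod_rogers_szego_at_roots_Suc:
  "(\<Prod>j<Suc n. poly (rogers_szego q n) (root_list (rogers_szego q (Suc n)) ! j))
    = of_real (\<Prod>i=1..n. (1 - q ^ i) ^ i)"
proof (induction n)
  case (Suc n)
  define z where "z j = root_list (rogers_szego q (Suc (Suc n))) ! j" for j
  define w where "w j = root_list (rogers_szego q (Suc n)) ! j" for j
  have lead: "coeff (rogers_szego q (Suc (Suc n))) (Suc (Suc n)) ^ Suc n
      = coeff (rogers_szego q (Suc n)) (Suc n) ^ Suc (Suc n)"
    by (simp only: coeff_rogers_szego_degree mult.commute flip: power_mult)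
  have "coeff (rogers_szego q (Suc n)) (Suc n) ^ Suc (Suc n) \<noteq> 0"
    using q by simp
  moreover have "(-1::complex) ^ (Suc (Suc n) * Suc n) = 1"
    by simp
  ultimately have "(\<Prod>j<Suc (Suc n). poly (rogers_szego q (Suc n)) (z j))
      = (\<Prod>i<Suc n. poly (rogers_szego q (Suc (Suc n))) (w i))"
    using prod_poly_at_root_list_swap[of "rogers_szego q (Suc (Suc n))" "rogers_szego q (Suc n)"]
    unfolding degree_rogers_szego lead by (simp add: z_def w_def del: coeff_rogers_szego_degree)
  also have "\<dots> = (\<Prod>i<Suc n. poly (rogers_szego q (Suc n)) (of_real q * w i))"
    using poly_root_list_nth[of "rogers_szego q (Suc n)"]
    by (intro prod.cong) (simp_all add: poly_rogers_szego_Suc w_def)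
  also have "\<dots> = of_real ((1 - q ^ Suc n) ^ Suc n) * (\<Prod>i<Suc n. poly (rogers_szego q n) (w i))"
    unfolding w_def by (rule prod_rogers_szego_at_q_roots_Suc)
  also have "(\<Prod>i<Suc n. poly (rogers_szego q n) (w i)) = of_real (\<Prod>i=1..n. (1 - q ^ i) ^ i)"
    using Suc.IH by (simp add: w_def)
  finally show ?case
    by (simp add: z_def prod.cl_ivl_Suc mult.commute)
qed simp

lemma prod_rogers_szego_at_q_roots:
  "(\<Prod>j<n. poly (rogers_szego q n) (of_real q * root_list (rogers_szego q n) ! j))
    = of_real (\<Prod>i=1..n. (1 - q ^ i) ^ i)"
proof (cases n)
  case (Suc m)
  then show ?thesis
    unfolding Suc prod_rogers_szego_at_q_roots_Suc prod_rogers_szego_at_roots_Suc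
    by (simp add: prod.cl_ivl_Suc mult.commute)
qed simp

lemma qdisc_rogers_szego_prod:
  "qdisc q (rogers_szego q n)
    = of_real ((-1) ^ (n * (n - 1) div 2) / q ^ (n * (n - 1) div 2) * (\<Prod>i=1..n. (1 - q ^ i) ^ i) / (1 - q) ^ n)"
proof (cases n)
  case 0
  then show ?thesis
    by (simp add: qdisc_root_list)
next
  case (Suc m)
  define N where "N = Suc m * m div 2"
  have "Suc m * m = 2 * N"
    by (simp add: N_def)
  then have "lead_coeff (rogers_szego q (Suc m)) ^ m = ((1 / of_real (sqrt q)) ^ 2) ^ N"
    by (simp only: degree_rogers_szego coeff_rogers_szego_degree flip: power_mult)
  also have "\<dots> = 1 / of_real q ^ N"
    using q by (simp add: power_divide flip: of_real_power)
  finally show ?thesis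
    using Suc q qdisc_eq_prod_poly_at_q_roots[of q "rogers_szego q n" m]
    by (simp add: prod_rogers_szego_at_q_roots N_def)
qed

lemma qdisc_rogers_szego:
  "qdisc q (rogers_szego q n) = of_real (1 / (- q) ^ (n * (n - 1) div 2) * (qpoch q q n / (1 - q)) ^ n
    * (\<Prod>j=1..n-1. 1 / qpoch q q j))"
proof -
  define N where "N = n * (n - 1) div 2"
  define F where "F = (\<Prod>j=1..n-1. qpoch q q j)"
  have "0 < F"
    by (simp add: F_def prod_pos qpoch_qq_pos)
  have "(- q) ^ N = (-1) ^ N * q ^ N"
    by (rule power_minus)
  moreover have "(-1::real) ^ N * (-1) ^ N = 1"
    by (simp flip: power_add mult_2)
  ultimately have "1 / (- q) ^ N = (-1) ^ N / q ^ N"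
    using q by (simp add: field_simps)
  moreover have "(\<Prod>i=1..n. (1 - q ^ i) ^ i) = qpoch q q n ^ n / F"
    using prod_qpoch_triangle[of q n, folded F_def] \<open>0 < F\<close> by (simp add: eq_divide_eq)
  ultimately show ?thesis
    using q by (simp add: qdisc_rogers_szego_prod prod_dividef power_divide N_def F_def)
qed

lemma qdisc_rs_phi:
  "qdisc q (rs_phi q n) = of_real ((- q) ^ (n * (n - 1) div 2) / (1 - q) ^ n * qpoch q q n
    * (\<Prod>j=1..n-1. 1 / qpoch q q j))"
proof -
  define N where "N = n * (n - 1) div 2"
  define X where "X = qpoch q q n"
  define c where "c = sqrt q ^ n / sqrt X"
  define P where "P = (\<Prod>j=1..n-1. 1 / qpoch q q j)"
  have "0 < X"
    by (simp add: X_def qpoch_qq_pos)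
  have "c ^ 2 = q ^ n / X"
    using q \<open>0 < X\<close> by (simp add: c_def power_divide flip: power_mult) (simp add: mult.commute[of n] power_mult)
  have c_powi: "c powi (2 * int n - 2) = q ^ (2 * N) / X ^ (n - 1)"
  proof (cases n)
    case (Suc m)
    then have "2 * int n - 2 = int (2 * m)" "n * m = 2 * N"
      by (simp_all add: N_def)
    then have "c powi (2 * int n - 2) = (c ^ 2) ^ m"
      by (simp only: power_int_of_nat power_mult)
    also have "\<dots> = q ^ (n * m) / X ^ m"
      by (simp only: \<open>c ^ 2 = q ^ n / X\<close> power_divide power_mult)
    finally show ?thesis
      using Suc \<open>n * m = 2 * N\<close> by simp
  qed (simp add: N_def c_def X_def)
  have "(-q) ^ N * (-q) ^ N = q ^ (2 * N)"
    by (simp flip: power_add mult_2 power_mult_distrib)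
  then have sign: "q ^ (2 * N) / (- q) ^ N = (- q) ^ N"
    using q by (simp add: field_simps)
  have cancel: "(X / (1 - q)) ^ n / X ^ (n - 1) = X / (1 - q) ^ n"
  proof (cases n)
    case (Suc m)
    have "(1 - q) ^ n \<noteq> 0"
      using q by simp
    then show ?thesis
      using \<open>0 < X\<close> Suc by (simp add: power_divide)
  qed (simp add: X_def)
  have "c \<noteq> 0"
    using q \<open>0 < X\<close> by (simp add: c_def)
  have "qdisc q (rs_phi q n) = of_real c powi (2 * int n - 2) * qdisc q (rogers_szego q n)"
    using \<open>c \<noteq> 0\<close> by (simp add: rs_phi_def qdisc_smult c_def X_def)
  also have "\<dots> = of_real (c powi (2 * int n - 2) * (1 / (- q) ^ N * (X / (1 - q)) ^ n) * P)"
    by (simp add: qdisc_rogers_szego N_def X_def P_def of_real_power_int mult.assoc)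
  also have "c powi (2 * int n - 2) * (1 / (- q) ^ N * (X / (1 - q)) ^ n)
      = (q ^ (2 * N) / (- q) ^ N) * ((X / (1 - q)) ^ n / X ^ (n - 1))"
    unfolding c_powi by simp
  also have "\<dots> = (- q) ^ N / (1 - q) ^ n * X"
    unfolding sign cancel by simp
  finally show ?thesis
    by (simp add: N_def X_def P_def)
qed

lemma qder_rs_phi:
  assumes "z \<noteq> 0"
  shows "qder (of_real q) (poly (rs_phi q (Suc m))) z
    = of_real (sqrt (1 - q ^ Suc m) / (1 - q)) * poly (rs_phi q m) z"
proof -
  define c where "c k = sqrt q ^ k / sqrt (qpoch q q k)" for k
  define s where "s = sqrt q"
  have "0 < s"
    using q by (simp add: s_def)
  have scaled: "c (Suc m) * (1 - q ^ Suc m) = s * c m * sqrt (1 - q ^ Suc m)"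
  proof -
    define r where "r = sqrt (1 - q ^ Suc m)"
    have "0 < r" "r * r = 1 - q ^ Suc m"
      using one_minus_q_power_pos[of m] by (simp_all add: r_def)
    have "c (Suc m) = s * c m / r"
      by (simp add: c_def s_def r_def qpoch_Suc real_sqrt_mult)
    then have "c (Suc m) * (1 - q ^ Suc m) = s * c m / r * (r * r)"
      by (simp only: \<open>r * r = 1 - q ^ Suc m\<close>)
    also have "\<dots> = s * c m * r"
      using \<open>0 < r\<close> by simp
    finally show ?thesis
      by (simp add: r_def)
  qed
  have coeff: "c (Suc m) * (1 - q ^ Suc m) / (s * (1 - q)) = sqrt (1 - q ^ Suc m) / (1 - q) * c m"
    unfolding scaled using \<open>0 < s\<close> by simp
  have "qder (of_real q) (poly (rs_phi q (Suc m))) z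
      = of_real (c (Suc m)) * (poly (rogers_szego q (Suc m)) z - poly (rogers_szego q (Suc m)) (of_real q * z))
        / (z * of_real (1 - q))"
  proof -
    have "poly (rs_phi q k) x = of_real (c k) * poly (rogers_szego q k) x" for k x
      by (simp add: rs_phi_def c_def)
    moreover have "z - of_real q * z = z * of_real (1 - q)"
      by (simp add: algebra_simps)
    ultimately show ?thesis
      by (simp only: qder_def flip: right_diff_distrib)
  qed
  also have "poly (rogers_szego q (Suc m)) z - poly (rogers_szego q (Suc m)) (of_real q * z)
      = of_real (1 - q ^ Suc m) * (z / of_real s) * poly (rogers_szego q m) z"
    by (simp add: poly_rogers_szego_q_diff s_def)
  also have "of_real (c (Suc m)) * (of_real (1 - q ^ Suc m) * (z / of_real s) * poly (rogers_szego q m) z)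
      / (z * of_real (1 - q))
      = of_real (c (Suc m) * (1 - q ^ Suc m) / (s * (1 - q))) * poly (rogers_szego q m) z"
    using assms q \<open>0 < s\<close> by (simp add: field_simps)
  also have "\<dots> = of_real (sqrt (1 - q ^ Suc m) / (1 - q)) * poly (rs_phi q m) z"
    unfolding coeff by (simp add: rs_phi_def c_def)
  finally show ?thesis .
qed

end

theorem mainTheorem10:
  fixes q :: real
  assumes "0 < q" and "q < 1"
  shows "(\<forall>n\<ge>1. \<forall>z::complex. z \<noteq> 0 \<longrightarrow>
            qder (complex_of_real q) (poly (rs_phi q n)) z
              = complex_of_real (sqrt (1 - q ^ n) / (1 - q)) * poly (rs_phi q (n - 1)) z)
       \<and> (\<forall>n. qdisc q (rs_phi q n) = complex_of_real
            ((- q) ^ (n * (n - 1) div 2) / (1 - q) ^ n * qpoch q q n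
              * (\<Prod>j=1..n-1. 1 / qpoch q q j)))
       \<and> (\<forall>n. qdisc q (rogers_szego q n) = complex_of_real
            (1 / (- q) ^ (n * (n - 1) div 2) * (qpoch q q n / (1 - q)) ^ n
              * (\<Prod>j=1..n-1. 1 / qpoch q q j)))"
proof (intro conjI allI impI)
  fix n :: nat and z :: complex
  assume "n \<ge> 1" "z \<noteq> 0"
  then obtain m where "n = Suc m"
    using not0_implies_Suc by fastforce
  then show "qder (complex_of_real q) (poly (rs_phi q n)) z
      = complex_of_real (sqrt (1 - q ^ n) / (1 - q)) * poly (rs_phi q (n - 1)) z"
    using qder_rs_phi[OF assms \<open>z \<noteq> 0\<close>] by simp
qed (use qdisc_rs_phi[OF assms] qdisc_rogers_szego[OF assms] in simp_all)

end
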